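(* Under the standing assumptions below, and for $x$ sufficiently large (in terms of $\epsilon$), if $|U|\geq 2$ then all elements of $A$ are even and there exists $a\in\{1,\dots,8\}$ such that for every $n\in A$: $n\equiv 2\pmod 4\iff n\equiv a\pmod 9$, and $n\equiv 0\pmod 4\iff n\equiv -a\pmod 9$.
   Context: Standing assumptions and notation: $\epsilon>0$ is fixed, $\delta_0=\frac14-\frac{2}{\pi^2}$, and $A\subseteq[1,x]\cap\mathbb{N}$ is a set with $|A|>(\delta_0+\epsilon)x$ such that $A+A=\{a+b:a,b\in A\}$ contains no squarefree integer, and $A$ is not a subset of $4\mathbb{N}$, nor of $9\mathbb{N}$, nor of $\{n\in\mathbb{N}:n\equiv 2\pmod 4\}$. For $a\in\{0,\dots,35\}$ put $\delta_a=\frac{36\cdot\#\{n\in A: n\equiv a\pmod{36}\}}{x}$. Let $U$ be the set of residues $a\bmod 36$ with $\delta_a>1-\frac{9}{\pi^2}+\epsilon/100$, let $V$ be the set of residues $a\bmod 36$ with $\delta_a>0$, and let $Q=\{0,4,8,9,12,16,18,20,24,27,28,32\}$ (the residue classes mod $36$ containing no squarefree integers). *)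

theory Defs
  imports Complex_Main "HOL-Computational_Algebra.Squarefree"
begin

definition delta0 :: real where
  "delta0 = 1/4 - 2 / pi^2"

definition sumset :: "nat set \<Rightarrow> nat set" where
  "sumset A = {a + b | a b. a \<in> A \<and> b \<in> A}"

definition res_density :: "nat set \<Rightarrow> real \<Rightarrow> nat \<Rightarrow> real" where
  "res_density A x a = 36 * real (card {n \<in> A. n mod 36 = a}) / x"

definition U_set :: "real \<Rightarrow> nat set \<Rightarrow> real \<Rightarrow> nat set" where
  "U_set \<epsilon> A x = {a. a < 36 \<and> res_density A x a > 1 - 9 / pi^2 + \<epsilon> / 100}"

end

theory Submission
  imports Defs "HOL-Analysis.Gamma_Function" "HOL-Number_Theory.Cong" "HOL-Real_Asymp.Real_Asymp"
begin

(*
  Call a residue t "square-full modulo 36" (Q36 t) if 4 divides t or 9 divides t; these are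
  exactly the classes mod 36 containing no squarefree integer (the set Q of the paper).

  Analytic core: in a class r mod 36 with 4 and 9 not dividing r, the non-squarefree integers
  in a window (b, b + N] with b <= N number at most N (1 - 9/pi^2)/36 + o(N).  This comes from
  sieving the class by the squares of the primes 5 <= p <= y (error 2^pi(y)), the Euler product
  bound prod_{p >= 5} (1 - 1/p^2) >= 9/pi^2, and a trivial count of multiples of k^2 for k > y.

  Consequently, if u is in U and b is in A, the translate of the dense class {n in A. n = u mod 36}
  by b, which lies in A + A, is too large unless u + b is square-full mod 36.  So every element
  of A is compatible with two distinct residues u1, u2 of U, and a finite computation over the
  residues mod 36 shows that then A lies in 4N, in 9N, in 2 + 4N, or has the claimed pattern.
*)


lemma card_nat_real_interval:
  fixes c d :: real
  assumes "-1 < c" "c \<le> d"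
  shows "real (card {k::nat. c < real k \<and> real k \<le> d}) \<le> d - c + 1"
    and "real (card {k::nat. c < real k \<and> real k \<le> d}) \<ge> d - c - 1"
proof -
  have floor_c: "\<lfloor>c\<rfloor> \<ge> -1" using assms(1) by (simp add: le_floor_iff)
  have image: "int ` {k::nat. c < real k \<and> real k \<le> d} = {\<lfloor>c\<rfloor><..\<lfloor>d\<rfloor>}"
  proof (intro set_eqI iffI)
    fix i assume "i \<in> int ` {k::nat. c < real k \<and> real k \<le> d}"
    then obtain k where k: "i = int k" "c < real k" "real k \<le> d" by auto
    have "\<lfloor>c\<rfloor> < int k" using k(2) by (metis floor_less_iff of_int_of_nat_eq)
    moreover have "int k \<le> \<lfloor>d\<rfloor>" using k(3) by (metis le_floor_iff of_int_of_nat_eq)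
    ultimately show "i \<in> {\<lfloor>c\<rfloor><..\<lfloor>d\<rfloor>}" using k(1) by simp
  next
    fix i assume i: "i \<in> {\<lfloor>c\<rfloor><..\<lfloor>d\<rfloor>}"
    then have "i \<ge> 0" using floor_c by auto
    then obtain k where k: "i = int k" by (metis nonneg_int_cases)
    have "\<lfloor>c\<rfloor> < int k" "int k \<le> \<lfloor>d\<rfloor>" using i k by auto
    then have "c < real k" "real k \<le> d"
      by (metis floor_less_iff of_int_of_nat_eq, metis le_floor_iff of_int_of_nat_eq)
    then show "i \<in> int ` {k::nat. c < real k \<and> real k \<le> d}" using k by auto
  qed
  have "card {k::nat. c < real k \<and> real k \<le> d} = card (int ` {k::nat. c < real k \<and> real k \<le> d})"
    by (rule card_image[symmetric]) (simp add: inj_on_def)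
  also have "\<dots> = nat (\<lfloor>d\<rfloor> - \<lfloor>c\<rfloor>)" unfolding image by simp
  finally have count: "real (card {k::nat. c < real k \<and> real k \<le> d}) = of_int \<lfloor>d\<rfloor> - of_int \<lfloor>c\<rfloor>"
    using floor_mono[OF assms(2)] by simp
  show "real (card {k::nat. c < real k \<and> real k \<le> d}) \<le> d - c + 1"
    unfolding count using of_int_floor_le[of d] real_of_int_floor_gt_diff_one[of c] by linarith
  show "real (card {k::nat. c < real k \<and> real k \<le> d}) \<ge> d - c - 1"
    unfolding count using of_int_floor_le[of c] real_of_int_floor_gt_diff_one[of d] by linarith
qed

lemma finite_nat_le_real: "finite {n::nat. real n \<le> b \<and> P n}"
proof (rule finite_subset[of _ "{..nat \<lceil>b\<rceil>}"])
  show "{n::nat. real n \<le> b \<and> P n} \<subseteq> {..nat \<lceil>b\<rceil>}"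
  proof
    fix n assume "n \<in> {n::nat. real n \<le> b \<and> P n}"
    then have "of_int (int n) \<le> b" by simp
    then have "int n \<le> \<lceil>b\<rceil>" by (meson le_of_int_ceiling of_int_le_iff order_trans)
    then show "n \<in> {..nat \<lceil>b\<rceil>}" by simp
  qed
qed simp

lemma card_residue_class_interval:
  fixes a b :: real and m r :: nat
  assumes "0 \<le> a" "a \<le> b" "r < m"
  shows "\<bar>real (card {n::nat. a < real n \<and> real n \<le> b \<and> n mod m = r}) - (b - a) / m\<bar> \<le> 1"
proof -
  have m: "real m > 0" using assms(3) by simp
  let ?c = "(a - r) / m" and ?d = "(b - r) / m"
  have "{n::nat. a < real n \<and> real n \<le> b \<and> n mod m = r} =
        (\<lambda>k. m * k + r) ` {k::nat. ?c < real k \<and> real k \<le> ?d}"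
  proof (intro set_eqI iffI)
    fix n assume n: "n \<in> {n::nat. a < real n \<and> real n \<le> b \<and> n mod m = r}"
    then have "n mod m = r" "a < real n" "real n \<le> b" by auto
    then have decomp: "n = m * (n div m) + r" by (metis div_mult_mod_eq mult.commute)
    then have "real n = m * real (n div m) + r" by (metis of_nat_add of_nat_mult)
    with \<open>a < real n\<close> \<open>real n \<le> b\<close> m have "?c < real (n div m)" "real (n div m) \<le> ?d"
      by (simp_all add: field_simps)
    with decomp show "n \<in> (\<lambda>k. m * k + r) ` {k::nat. ?c < real k \<and> real k \<le> ?d}" by blast
  next
    fix n assume "n \<in> (\<lambda>k. m * k + r) ` {k::nat. ?c < real k \<and> real k \<le> ?d}"
    then obtain k where "n = m * k + r" "?c < real k" "real k \<le> ?d" by auto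
    then show "n \<in> {n::nat. a < real n \<and> real n \<le> b \<and> n mod m = r}"
      using assms(3) m by (auto simp: field_simps)
  qed
  moreover have "inj (\<lambda>k::nat. m * k + r)" using m by (auto simp: inj_on_def)
  ultimately have count: "card {n::nat. a < real n \<and> real n \<le> b \<and> n mod m = r} =
      card {k::nat. ?c < real k \<and> real k \<le> ?d}"
    by (simp add: card_image inj_on_subset)
  have "-1 < ?c" "?c \<le> ?d" using assms m by (auto simp: field_simps)
  moreover have "?d - ?c = (b - a) / m" by (simp add: diff_divide_distrib)
  ultimately show ?thesis
    unfolding count using card_nat_real_interval[of ?c ?d] by (simp add: abs_le_iff)
qed


subsection \<open>Sieving a residue class by squares of primes\<close>

definition sieved_count :: "nat \<Rightarrow> nat set \<Rightarrow> nat \<Rightarrow> real \<Rightarrow> real \<Rightarrow> nat" where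
  "sieved_count m P r a b =
     card {n::nat. a < real n \<and> real n \<le> b \<and> n mod m = r \<and> (\<forall>p\<in>P. \<not> p^2 dvd n)}"

lemma mod_mult_inverse_iff:
  fixes q s k r m :: nat
  assumes s: "[q * s = 1] (mod m)" and r: "r < m"
  shows "(q * k) mod m = r \<longleftrightarrow> k mod m = (r * s) mod m"
proof
  assume "(q * k) mod m = r"
  then have "[q * k = r] (mod m)" using r by (simp add: cong_def)
  then have scaled: "[s * (q * k) = s * r] (mod m)" by (rule cong_scalar_left)
  have "[(q * s) * k = 1 * k] (mod m)" using s by (rule cong_scalar_right)
  then have "[s * (q * k) = k] (mod m)" by (simp add: ac_simps)
  then have "[k = s * r] (mod m)" using scaled by (meson cong_sym cong_trans)
  then show "k mod m = (r * s) mod m" by (simp add: cong_def ac_simps)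
next
  assume "k mod m = (r * s) mod m"
  then have "[k = r * s] (mod m)" by (simp add: cong_def)
  then have scaled: "[q * k = q * (r * s)] (mod m)" by (rule cong_scalar_left)
  have "[(q * s) * r = 1 * r] (mod m)" using s by (rule cong_scalar_right)
  then have "[q * (r * s) = r] (mod m)" by (simp add: ac_simps)
  then have "[q * k = r] (mod m)" using scaled by (meson cong_trans)
  then show "(q * k) mod m = r" using r by (simp add: cong_def)
qed

lemma sieved_square_multiples:
  fixes q s m r :: nat and a b :: real
  assumes q: "prime q" "q \<notin> F" and F: "\<forall>p\<in>F. prime p"
    and s: "[q^2 * s = 1] (mod m)" and r: "r < m"
  shows "card {n::nat. a < real n \<and> real n \<le> b \<and> n mod m = r \<and> (\<forall>p\<in>F. \<not> p^2 dvd n) \<and> q^2 dvd n}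
       = sieved_count m F ((r * s) mod m) (a / (real q)^2) (b / (real q)^2)"
proof -
  have q0: "q > 0" using prime_gt_0_nat[OF q(1)] .
  then have q2: "(real q)^2 > 0" by simp
  have coprime_square: "p^2 dvd q^2 * k \<longleftrightarrow> p^2 dvd k" if "p \<in> F" for p k
  proof -
    have "p \<noteq> q" using that q(2) by auto
    then have "coprime p q" using F that q(1) primes_coprime by blast
    then have "coprime (p^2) (q^2)" by simp
    then show ?thesis by (rule coprime_dvd_mult_right_iff)
  qed
  have class_shift: "(q^2 * k) mod m = r \<longleftrightarrow> k mod m = (r * s) mod m" for k
    by (rule mod_mult_inverse_iff[OF s r])
  have window: "a < real (q^2 * k) \<longleftrightarrow> a / (real q)^2 < real k"
    "real (q^2 * k) \<le> b \<longleftrightarrow> real k \<le> b / (real q)^2" for k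
    using q2 by (simp_all add: field_simps)
  have "{n::nat. a < real n \<and> real n \<le> b \<and> n mod m = r \<and> (\<forall>p\<in>F. \<not> p^2 dvd n) \<and> q^2 dvd n} =
        (\<lambda>k. q^2 * k) ` {k::nat. a / (real q)^2 < real k \<and> real k \<le> b / (real q)^2 \<and>
                                 k mod m = (r * s) mod m \<and> (\<forall>p\<in>F. \<not> p^2 dvd k)}"
    (is "?T = _ ` ?S")
  proof (intro set_eqI iffI)
    fix n assume n: "n \<in> ?T"
    then obtain k where k: "n = q^2 * k" by (auto elim: dvdE)
    then have "k \<in> ?S" using n coprime_square class_shift window by auto
    then show "n \<in> (\<lambda>k. q^2 * k) ` ?S" using k by blast
  next
    fix n assume "n \<in> (\<lambda>k. q^2 * k) ` ?S"
    then obtain k where "n = q^2 * k" "k \<in> ?S" by auto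
    then show "n \<in> ?T" using coprime_square class_shift window by auto
  qed
  moreover have "inj_on (\<lambda>k. q^2 * k) ?S" using q0 by (auto simp: inj_on_def)
  ultimately show ?thesis unfolding sieved_count_def by (simp add: card_image)
qed

lemma sieved_count_approx:
  assumes "finite P" "\<forall>p\<in>P. prime p \<and> \<not> p dvd m" "r < m" "0 \<le> a" "a \<le> b"
  shows "\<bar>real (sieved_count m P r a b) - (b - a) / m * (\<Prod>p\<in>P. 1 - 1 / (real p)^2)\<bar> \<le> 2 ^ card P"
  using assms
proof (induction P arbitrary: r a b rule: finite_induct)
  case empty
  then show ?case using card_residue_class_interval[of a b r m] by (simp add: sieved_count_def)
next
  case (insert q F)
  have q: "prime q" "\<not> q dvd m" and F: "\<forall>p\<in>F. prime p \<and> \<not> p dvd m" using insert.prems by auto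
  have q2: "(real q)^2 > 0" using prime_gt_0_nat[OF q(1)] by simp
  have "coprime (q^2) m" using prime_imp_coprime[OF q] by simp
  then obtain s where s: "[q^2 * s = 1] (mod m)" using cong_solve_coprime_nat[of "q^2" m] by auto
  define S where "S = {n::nat. a < real n \<and> real n \<le> b \<and> n mod m = r \<and> (\<forall>p\<in>F. \<not> p^2 dvd n)}"
  define T where "T = {n \<in> S. q^2 dvd n}"
  have "finite S" unfolding S_def
    using finite_nat_le_real[of b "\<lambda>n. a < real n \<and> n mod m = r \<and> (\<forall>p\<in>F. \<not> p^2 dvd n)"]
    by (simp add: conj_commute conj_left_commute)
  moreover have "T \<subseteq> S" unfolding T_def by auto
  moreover have "{n::nat. a < real n \<and> real n \<le> b \<and> n mod m = r \<and> (\<forall>p\<in>insert q F. \<not> p^2 dvd n)}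
      = S - T" unfolding S_def T_def by auto
  ultimately have "sieved_count m (insert q F) r a b = card S - card T" "card T \<le> card S"
    unfolding sieved_count_def by (simp_all add: card_Diff_subset finite_subset card_mono)
  then have split: "real (sieved_count m (insert q F) r a b) = real (card S) - real (card T)" by simp
  define X where "X = (b - a) / m * (\<Prod>p\<in>F. 1 - 1 / (real p)^2)"
  have S_approx: "\<bar>real (card S) - X\<bar> \<le> 2 ^ card F"
    using insert.IH[OF F insert.prems(2-4)] unfolding S_def X_def sieved_count_def .
  have T_count: "card T = sieved_count m F ((r * s) mod m) (a / (real q)^2) (b / (real q)^2)"
    unfolding T_def S_def using sieved_square_multiples[OF q(1) insert.hyps(2) _ s insert.prems(2)] F
    by (simp add: conj_assoc)
  have T_window: "0 \<le> a / (real q)^2" "a / (real q)^2 \<le> b / (real q)^2"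
    using insert.prems q2 by (auto intro: divide_right_mono)
  have T_main: "(b / (real q)^2 - a / (real q)^2) / m * (\<Prod>p\<in>F. 1 - 1 / (real p)^2) = X / (real q)^2"
    unfolding X_def using q2 by (simp add: field_simps)
  have "(r * s) mod m < m" using insert.prems(2) by simp
  from insert.IH[OF F this T_window]
  have T_approx: "\<bar>real (card T) - X / (real q)^2\<bar> \<le> 2 ^ card F"
    unfolding T_count T_main .
  have "(b - a) / m * (\<Prod>p\<in>insert q F. 1 - 1 / (real p)^2) = X - X / (real q)^2"
    using insert.hyps q2 insert.prems(2) unfolding X_def by (simp add: field_simps)
  then show ?case unfolding split using S_approx T_approx insert.hyps by (simp add: abs_le_iff)
qed


subsection \<open>The Euler product lower bound\<close>

definition zeta2_partial :: "nat set \<Rightarrow> nat \<Rightarrow> real" where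
  "zeta2_partial P K = (\<Sum>n\<in>{n\<in>{1..K}. \<forall>p\<in>P. \<not> p dvd n}. 1 / (real n)^2)"

lemma zeta2_partial_empty_limit: "(\<lambda>K. zeta2_partial {} K) \<longlonglongrightarrow> pi^2 / 6"
proof -
  have "(\<Sum>n<K. 1 / (1 + real n)^2) = zeta2_partial {} K" for K
  proof -
    have "(\<Sum>n<K. 1 / (1 + real n)^2) = (\<Sum>n<K. (\<lambda>m. 1 / (real m)^2) (Suc n))" by simp
    also have "\<dots> = (\<Sum>n=1..K. 1 / (real n)^2)" by (rule sum_bounds_lt_plus1)
    moreover have "{n\<in>{1..K}. \<forall>p\<in>{}. \<not> p dvd n} = {1..K}" by auto
    ultimately show ?thesis unfolding zeta2_partial_def by simp
  qed
  then show ?thesis using inverse_squares_sums by (simp add: sums_def)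
qed

lemma zeta2_partial_insert:
  assumes "prime q" "q \<notin> F" "\<forall>p\<in>F. prime p"
  shows "zeta2_partial (insert q F) K = zeta2_partial F K - zeta2_partial F (K div q) / (real q)^2"
proof -
  define avoid where "avoid K = {n\<in>{1..K}. \<forall>p\<in>F. \<not> p dvd n}" for K
  define B where "B = {n \<in> avoid K. q dvd n}"
  have q: "q > 0" using assms(1) prime_gt_0_nat by blast
  have not_dvd: "p dvd q * k \<longleftrightarrow> p dvd k" if "p \<in> F" for p k
  proof -
    have "prime p" "p \<noteq> q" using assms that by auto
    then have "\<not> p dvd q" using assms(1) primes_dvd_imp_eq by blast
    then show ?thesis using \<open>prime p\<close> by (simp add: prime_dvd_mult_iff)
  qed
  have B_image: "B = (\<lambda>k. q * k) ` avoid (K div q)"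
  proof (intro set_eqI iffI)
    fix n assume n: "n \<in> B"
    then obtain k where k: "n = q * k" unfolding B_def by (auto elim: dvdE)
    have "q * k \<le> K" using n k unfolding B_def avoid_def by simp
    then have "k \<le> K div q" using q by (simp add: less_eq_div_iff_mult_less_eq mult.commute)
    moreover have "1 \<le> k" using n k unfolding B_def avoid_def by (cases k) auto
    ultimately have "k \<in> avoid (K div q)" using n k not_dvd unfolding B_def avoid_def by auto
    then show "n \<in> (\<lambda>k. q * k) ` avoid (K div q)" using k by blast
  next
    fix n assume "n \<in> (\<lambda>k. q * k) ` avoid (K div q)"
    then obtain k where k: "n = q * k" "k \<in> avoid (K div q)" by auto
    have "q * k \<le> q * (K div q)" using k(2) unfolding avoid_def by simp
    also have "\<dots> \<le> K" by simp
    finally show "n \<in> B" using k not_dvd q unfolding B_def avoid_def by auto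
  qed
  have "(\<Sum>n\<in>B. 1 / (real n)^2) = sum ((\<lambda>n. 1 / (real n)^2) \<circ> (\<lambda>k. q * k)) (avoid (K div q))"
    unfolding B_image using q by (intro sum.reindex) (auto simp: inj_on_def)
  also have "\<dots> = zeta2_partial F (K div q) / (real q)^2"
    unfolding zeta2_partial_def avoid_def by (simp add: sum_divide_distrib power_mult_distrib field_simps)
  finally have sum_B: "(\<Sum>n\<in>B. 1 / (real n)^2) = zeta2_partial F (K div q) / (real q)^2" .
  have "B \<subseteq> avoid K" "finite (avoid K)" unfolding B_def avoid_def by auto
  then have "zeta2_partial F K = (\<Sum>n\<in>avoid K - B. 1 / (real n)^2) + (\<Sum>n\<in>B. 1 / (real n)^2)"
    unfolding zeta2_partial_def avoid_def[symmetric] by (rule sum.subset_diff)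
  moreover have "{n\<in>{1..K}. \<forall>p\<in>insert q F. \<not> p dvd n} = avoid K - B" unfolding avoid_def B_def by auto
  ultimately show ?thesis unfolding zeta2_partial_def sum_B by simp
qed

lemma zeta2_partial_limit:
  assumes "finite P" "\<forall>p\<in>P. prime p"
  shows "(\<lambda>K. zeta2_partial P K) \<longlonglongrightarrow> (\<Prod>p\<in>P. 1 - 1 / (real p)^2) * (pi^2 / 6)"
  using assms
proof (induction P rule: finite_induct)
  case empty
  then show ?case using zeta2_partial_empty_limit by simp
next
  case (insert q F)
  have q: "prime q" "real q > 0" and F: "\<forall>p\<in>F. prime p" using insert.prems prime_gt_0_nat by auto
  let ?L = "(\<Prod>p\<in>F. 1 - 1 / (real p)^2) * (pi^2 / 6)"
  have lim: "(\<lambda>K. zeta2_partial F K) \<longlonglongrightarrow> ?L" using insert.IH F by simp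
  moreover have "(\<lambda>K. zeta2_partial F (K div q)) \<longlonglongrightarrow> ?L"
    using filterlim_compose[OF lim filterlim_at_top_div_const_nat[of q]] q by (simp add: o_def)
  ultimately have "(\<lambda>K. zeta2_partial F K - zeta2_partial F (K div q) / (real q)^2) \<longlonglongrightarrow> ?L - ?L / (real q)^2"
    using q by (intro tendsto_intros) auto
  moreover have "?L - ?L / (real q)^2 = (\<Prod>p\<in>insert q F. 1 - 1 / (real p)^2) * (pi^2 / 6)"
    using insert.hyps q by (simp add: field_simps)
  moreover have "(\<lambda>K. zeta2_partial (insert q F) K) =
      (\<lambda>K. zeta2_partial F K - zeta2_partial F (K div q) / (real q)^2)"
    using zeta2_partial_insert[OF q(1) insert.hyps(2) F] by simp
  ultimately show ?case by metis
qed

text \<open>Any finite Euler product for zeta(2)^{-1} is at least 6/pi^2, since each partial sum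
  contains the term n = 1.\<close>

lemma euler_product_lower_bound:
  assumes "finite P" "\<forall>p\<in>P. prime p"
  shows "(\<Prod>p\<in>P. 1 - 1 / (real p)^2) \<ge> 6 / pi^2"
proof -
  have "1 \<le> zeta2_partial P K" if "K \<ge> 1" for K
  proof -
    have "1 \<in> {n\<in>{1..K}. \<forall>p\<in>P. \<not> p dvd n}" using that assms(2) by auto
    then have "1 / (real 1)^2 \<le> zeta2_partial P K" unfolding zeta2_partial_def
      by (intro member_le_sum) auto
    then show ?thesis by simp
  qed
  then have "1 \<le> (\<Prod>p\<in>P. 1 - 1 / (real p)^2) * (pi^2 / 6)"
    using LIMSEQ_le_const[OF zeta2_partial_limit[OF assms]] by blast
  then show ?thesis by (simp add: field_simps)
qed

text \<open>Without the factors for 2 and 3 (which multiply to 2/3) the bound becomes 9/pi^2.\<close>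

lemma euler_product_lower_bound_ge5:
  assumes "finite P" "\<forall>p\<in>P. prime p \<and> p \<ge> 5"
  shows "(\<Prod>p\<in>P. 1 - 1 / (real p)^2) \<ge> 9 / pi^2"
proof -
  have "2 \<notin> P" "3 \<notin> P" using assms(2) by auto
  have "6 / pi^2 \<le> (\<Prod>p\<in>insert 2 (insert 3 P). 1 - 1 / (real p)^2)"
    using assms by (intro euler_product_lower_bound) auto
  also have "\<dots> = (2/3) * (\<Prod>p\<in>P. 1 - 1 / (real p)^2)"
    using assms(1) \<open>2 \<notin> P\<close> \<open>3 \<notin> P\<close> by simp
  finally show ?thesis by (simp add: field_simps)
qed

text \<open>The threshold 1 - 9/pi^2 is positive, so residues of U have positive density.\<close>

lemma nine_div_pi_sq_less_one: "9 / pi^2 < 1"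
proof -
  have "(3::real)^2 < pi^2" using pi_gt3 by (intro power_strict_mono) auto
  then show ?thesis by simp
qed


subsection \<open>Non-squarefree integers in a residue class\<close>

text \<open>Telescoping via 1/(k+1)^2 <= 1/k - 1/(k+1).\<close>

lemma inverse_square_tail_telescoping:
  assumes "(y::nat) \<ge> 1" "y \<le> K"
  shows "(\<Sum>k\<in>{y<..K}. 1 / (real k)^2) \<le> 1 / real y - 1 / real K"
  using assms(2)
proof (induction K rule: dec_induct)
  case base
  then show ?case by simp
next
  case (step K)
  have K: "real K \<ge> 1" using step.hyps assms(1) by simp
  have "1 / (real (Suc K))^2 \<le> 1 / (real K * real (Suc K))"
    using K by (intro divide_left_mono) (auto simp: power2_eq_square)
  also have "\<dots> = 1 / real K - 1 / real (Suc K)" using K by (simp add: field_simps)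
  finally have "1 / (real (Suc K))^2 \<le> 1 / real K - 1 / real (Suc K)" .
  moreover have "{y<..Suc K} = insert (Suc K) {y<..K}" using step.hyps by auto
  ultimately show ?case using step.IH by simp
qed

lemma inverse_square_tail:
  assumes "(y::nat) \<ge> 1"
  shows "(\<Sum>k\<in>{y<..K}. 1 / (real k)^2) \<le> 1 / real y"
proof (cases "y \<le> K")
  case True
  have "0 \<le> 1 / real K" by simp
  then show ?thesis using inverse_square_tail_telescoping[OF assms True] by linarith
qed simp

lemma card_square_multiples:
  fixes k b N :: nat
  assumes "k \<ge> 1"
  shows "real (card {n. b < n \<and> n \<le> b + N \<and> k^2 dvd n}) \<le> real N / (real k)^2 + 1"
proof -
  have "{n. b < n \<and> n \<le> b + N \<and> k^2 dvd n} =
        {n::nat. real b < real n \<and> real n \<le> real (b + N) \<and> n mod k^2 = 0}"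
    by (auto simp: dvd_eq_mod_eq_0)
  moreover have "\<bar>real (card {n::nat. real b < real n \<and> real n \<le> real (b + N) \<and> n mod k^2 = 0})
      - (real (b + N) - real b) / real (k^2)\<bar> \<le> 1"
    using assms by (intro card_residue_class_interval) auto
  ultimately show ?thesis by (simp add: abs_le_iff)
qed

lemma prime_ge5_not_dvd_36:
  assumes "prime (p::nat)" "5 \<le> p"
  shows "\<not> p dvd 36"
proof
  assume "p dvd 36"
  then have "p dvd 2 * 2 * (3 * 3)" by simp
  then have "p dvd 2 \<or> p dvd 3" using assms(1) by (metis prime_dvd_mult_iff)
  then show False using assms(2) by (auto dest: dvd_imp_le)
qed

lemma prime_square_divisor_ge5:
  fixes n :: nat
  assumes "\<not> squarefree n" "\<not> 4 dvd n" "\<not> 9 dvd n"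
  obtains p where "prime p" "5 \<le> p" "p^2 dvd n"
proof -
  have "n \<noteq> 0" using assms(2) by (metis dvd_0_right)
  then obtain p where p: "prime p" "p^2 dvd n" using assms(1) squarefree_factorial_semiring by blast
  have "p \<noteq> 2" "p \<noteq> 3" using p assms(2,3) by auto
  moreover have "p \<noteq> 4" using p prime_product[of 2 2] by auto
  moreover have "p \<ge> 2" using p prime_ge_2_nat by blast
  ultimately have "5 \<le> p" by linarith
  with p that show ?thesis by blast
qed

lemma sieved_class_lower_bound:
  assumes r: "r < 36"
  shows "real (sieved_count 36 {p. prime p \<and> 5 \<le> p \<and> p \<le> y} r (real b) (real (b + N)))
    \<ge> real N / 36 * (9 / pi^2) - 2 ^ card {p. prime p \<and> 5 \<le> p \<and> p \<le> y}"
proof -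
  define P where "P = {p. prime p \<and> 5 \<le> p \<and> p \<le> y}"
  have "\<forall>p\<in>P. prime p \<and> \<not> p dvd 36" unfolding P_def using prime_ge5_not_dvd_36 by auto
  from sieved_count_approx[OF _ this r, of "real b" "real (b + N)"]
  have "real (sieved_count 36 P r (real b) (real (b + N)))
      \<ge> real N / 36 * (\<Prod>p\<in>P. 1 - 1 / (real p)^2) - 2 ^ card P"
    unfolding P_def by (simp add: abs_le_iff)
  moreover have "(\<Prod>p\<in>P. 1 - 1 / (real p)^2) \<ge> 9 / pi^2"
    by (rule euler_product_lower_bound_ge5) (auto simp: P_def)
  then have "real N / 36 * (\<Prod>p\<in>P. 1 - 1 / (real p)^2) \<ge> real N / 36 * (9 / pi^2)"
    by (intro mult_left_mono) auto
  ultimately show ?thesis unfolding P_def by linarith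
qed

lemma square_multiples_beyond_count:
  fixes y b N :: nat
  assumes y: "y \<ge> 1" and bN: "b \<le> N"
  shows "(\<Sum>k\<in>{y<..nat \<lfloor>sqrt (real (b + N))\<rfloor>}. real (card {n. b < n \<and> n \<le> b + N \<and> k^2 dvd n}))
    \<le> real N / real y + sqrt (2 * real N)"
proof -
  define K where "K = nat \<lfloor>sqrt (real (b + N))\<rfloor>"
  have "(\<Sum>k\<in>{y<..K}. real (card {n. b < n \<and> n \<le> b + N \<and> k^2 dvd n}))
      \<le> (\<Sum>k\<in>{y<..K}. real N / (real k)^2 + 1)"
    using card_square_multiples y by (intro sum_mono) auto
  also have "\<dots> = real N * (\<Sum>k\<in>{y<..K}. 1 / (real k)^2) + real (K - y)"
    by (simp add: sum.distrib sum_distrib_left)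
  also have "\<dots> \<le> real N * (1 / real y) + real K"
    using inverse_square_tail[OF y, of K] by (intro add_mono mult_left_mono) auto
  also have "real K \<le> sqrt (2 * real N)"
  proof -
    have "real K \<le> sqrt (real (b + N))" unfolding K_def by simp
    also have "\<dots> \<le> sqrt (2 * real N)" using bN by simp
    finally show ?thesis .
  qed
  finally show ?thesis unfolding K_def by simp
qed

lemma nonsquarefree_in_class_count:
  fixes y N b r :: nat
  assumes y: "y \<ge> 1" and r: "r < 36" "\<not> 4 dvd r" "\<not> 9 dvd r" and bN: "b \<le> N"
  shows "real (card {n. b < n \<and> n \<le> b + N \<and> n mod 36 = r \<and> \<not> squarefree n})
     \<le> real N / 36 * (1 - 9 / pi^2) + real N / real y + 1
        + 2 ^ card {p. prime p \<and> 5 \<le> p \<and> p \<le> y} + sqrt (2 * real N)"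
proof -
  define P where "P = {p. prime p \<and> 5 \<le> p \<and> p \<le> y}"
  define window where "window = {n::nat. real b < real n \<and> real n \<le> real (b + N) \<and> n mod 36 = r}"
  define sieved where
    "sieved = {n::nat. real b < real n \<and> real n \<le> real (b + N) \<and> n mod 36 = r \<and> (\<forall>p\<in>P. \<not> p^2 dvd n)}"
  define K where "K = nat \<lfloor>sqrt (real (b + N))\<rfloor>"
  define M where "M k = {n. b < n \<and> n \<le> b + N \<and> k^2 dvd n}" for k :: nat
  have fin_window: "finite window" unfolding window_def
    using finite_nat_le_real[of "real (b + N)" "\<lambda>n. real b < real n \<and> n mod 36 = r"]
    by (simp add: conj_commute conj_left_commute)
  have sieved_window: "sieved \<subseteq> window" unfolding sieved_def window_def by auto
  have "finite (M k)" for k unfolding M_def by (rule finite_subset[of _ "{..b + N}"]) auto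
  have cover: "{n. b < n \<and> n \<le> b + N \<and> n mod 36 = r \<and> \<not> squarefree n}
      \<subseteq> (window - sieved) \<union> (\<Union>k\<in>{y<..K}. M k)"
  proof
    fix n assume "n \<in> {n. b < n \<and> n \<le> b + N \<and> n mod 36 = r \<and> \<not> squarefree n}"
    then have n: "b < n" "n \<le> b + N" "n mod 36 = r" "\<not> squarefree n" by auto
    have "\<not> 4 dvd n" "\<not> 9 dvd n" using r n(3) dvd_mod_iff[of 4 36 n] dvd_mod_iff[of 9 36 n] by auto
    then obtain p where p: "prime p" "5 \<le> p" "p^2 dvd n" using prime_square_divisor_ge5 n(4) by blast
    show "n \<in> (window - sieved) \<union> (\<Union>k\<in>{y<..K}. M k)"
    proof (cases "p \<le> y")
      case True
      then show ?thesis using n p unfolding window_def sieved_def P_def by auto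
    next
      case False
      have "p^2 \<le> n" using p(3) n(1) by (simp add: dvd_imp_le)
      then have "real p ^ 2 \<le> real (b + N)" using n(2) by (simp flip: of_nat_power)
      then have "real p \<le> sqrt (real (b + N))" by (rule real_le_rsqrt)
      then have "p \<le> K" unfolding K_def by (simp add: le_nat_floor)
      then show ?thesis using False n p unfolding M_def by auto
    qed
  qed
  have "card {n. b < n \<and> n \<le> b + N \<and> n mod 36 = r \<and> \<not> squarefree n}
      \<le> card ((window - sieved) \<union> (\<Union>k\<in>{y<..K}. M k))"
    by (rule card_mono[OF _ cover]) (use fin_window \<open>\<And>k. finite (M k)\<close> in auto)
  also have "\<dots> \<le> card (window - sieved) + card (\<Union>k\<in>{y<..K}. M k)" by (rule card_Un_le)
  also have "card (\<Union>k\<in>{y<..K}. M k) \<le> (\<Sum>k\<in>{y<..K}. card (M k))" by (rule card_UN_le) simp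
  finally have "real (card {n. b < n \<and> n \<le> b + N \<and> n mod 36 = r \<and> \<not> squarefree n})
      \<le> real (card (window - sieved)) + (\<Sum>k\<in>{y<..K}. real (card (M k)))"
    by (simp flip: of_nat_sum of_nat_add of_nat_le_iff)
  moreover have "real (card (window - sieved)) = real (card window) - real (card sieved)"
    using sieved_window fin_window by (simp add: card_Diff_subset finite_subset card_mono of_nat_diff)
  ultimately have total: "real (card {n. b < n \<and> n \<le> b + N \<and> n mod 36 = r \<and> \<not> squarefree n})
      \<le> real (card window) - real (card sieved) + (\<Sum>k\<in>{y<..K}. real (card (M k)))"
    by simp
  have "real (card window) \<le> real N / 36 + 1"
    using card_residue_class_interval[of "real b" "real (b + N)" r 36] r
    unfolding window_def by (simp add: abs_le_iff)
  moreover have "real (card sieved) \<ge> real N / 36 * (9 / pi^2) - 2 ^ card P"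
    using sieved_class_lower_bound[OF r(1), of N y b] unfolding sieved_count_def sieved_def P_def .
  moreover have "(\<Sum>k\<in>{y<..K}. real (card (M k))) \<le> real N / real y + sqrt (2 * real N)"
    using square_multiples_beyond_count[OF y bN] unfolding M_def K_def .
  moreover have "real N / 36 * (1 - 9 / pi^2) = real N / 36 - real N / 36 * (9 / pi^2)"
    by (simp add: right_diff_distrib)
  ultimately show ?thesis using total unfolding P_def by linarith
qed

lemma nonsquarefree_in_class_density:
  fixes \<delta> :: real
  assumes "\<delta> > 0"
  shows "\<forall>\<^sub>F N in sequentially. \<forall>b r. b \<le> N \<longrightarrow> r < 36 \<longrightarrow> \<not> 4 dvd r \<longrightarrow> \<not> 9 dvd r \<longrightarrow>
     real (card {n. b < n \<and> n \<le> b + N \<and> n mod 36 = r \<and> \<not> squarefree n})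
       \<le> real N / 36 * (1 - 9 / pi^2) + \<delta> * real N"
proof -
  define y where "y = nat \<lceil>2 / \<delta>\<rceil>"
  have "1 \<le> \<lceil>2 / \<delta>\<rceil>" using assms by (simp add: one_le_ceiling)
  then have y: "y \<ge> 1" "2 / \<delta> \<le> real y"
    unfolding y_def using nat_mono real_nat_ceiling_ge by fastforce+
  have tail: "real N / real y \<le> \<delta> * real N / 2" for N :: nat
  proof -
    have "real N / real y \<le> real N / (2 / \<delta>)" using y assms by (intro divide_left_mono) auto
    then show ?thesis by (simp add: mult.commute[of \<delta>])
  qed
  define C :: real where "C = 1 + 2 ^ card {p. prime p \<and> 5 \<le> p \<and> p \<le> y}"
  have "\<forall>\<^sub>F N in sequentially. C + sqrt (2 * real N) \<le> \<delta> * real N / 2"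
    using assms by real_asymp
  then show ?thesis
  proof (rule eventually_mono, intro allI impI)
    fix N b r :: nat
    assume "C + sqrt (2 * real N) \<le> \<delta> * real N / 2" "b \<le> N" "r < 36" "\<not> 4 dvd r" "\<not> 9 dvd r"
    then show "real (card {n. b < n \<and> n \<le> b + N \<and> n mod 36 = r \<and> \<not> squarefree n})
       \<le> real N / 36 * (1 - 9 / pi^2) + \<delta> * real N"
      using nonsquarefree_in_class_count[OF y(1), of r b N] tail[of N] unfolding C_def by linarith
  qed
qed


subsection \<open>Residues of U force square-full sums\<close>

text \<open>Residues t mod 36 all of whose integers are non-squarefree: 4 divides t or 9 divides t.\<close>

definition Q36 :: "nat \<Rightarrow> bool" where
  "Q36 t \<longleftrightarrow> 4 dvd t \<or> 9 dvd t"

lemma Q36_mod: "Q36 (t mod 36) \<longleftrightarrow> Q36 t"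
  unfolding Q36_def using dvd_mod_iff[of 4 36 t] dvd_mod_iff[of 9 36 t] by auto

lemma Q36_add_mod: "Q36 (u + b mod 36) \<longleftrightarrow> Q36 (u + b)"
  by (metis Q36_mod mod_add_right_eq)

text \<open>Every residue of U is represented in A (its density is positive).\<close>

lemma U_residue_represented:
  assumes "\<epsilon> > 0" "u \<in> U_set \<epsilon> A x"
  obtains b where "b \<in> A" "b mod 36 = u" "u < 36"
proof -
  have "res_density A x u > 1 - 9 / pi^2 + \<epsilon> / 100" "u < 36"
    using assms(2) unfolding U_set_def by auto
  moreover have "1 - 9 / pi^2 + \<epsilon> / 100 > 0" using nine_div_pi_sq_less_one assms(1) by linarith
  ultimately have "{n \<in> A. n mod 36 = u} \<noteq> {}" unfolding res_density_def by fastforce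
  then show ?thesis using that \<open>u < 36\<close> by blast
qed

text \<open>If u is in U and b in A, the translate by b of the class of u in A consists of
  non-squarefree integers (elements of A + A) in the class u + b mod 36 inside (b, b + N],
  N = floor x, and it is as large as that class of A.\<close>

lemma dense_class_translate:
  assumes x: "x > 0" and A: "A \<subseteq> {n. 1 \<le> n \<and> real n \<le> x}"
    and sums: "\<forall>m\<in>sumset A. \<not> squarefree m" and u: "u \<in> U_set \<epsilon> A x" and b: "b \<in> A"
  shows "(1 - 9 / pi^2 + \<epsilon> / 100) * x / 36 <
    real (card {n. b < n \<and> n \<le> b + nat \<lfloor>x\<rfloor> \<and> n mod 36 = (u + b) mod 36 \<and> \<not> squarefree n})"
proof -
  define Au where "Au = {n \<in> A. n mod 36 = u}"
  define NS where "NS = {n. b < n \<and> n \<le> b + nat \<lfloor>x\<rfloor> \<and> n mod 36 = (u + b) mod 36 \<and> \<not> squarefree n}"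
  have "finite NS" unfolding NS_def by (rule finite_subset[of _ "{..b + nat \<lfloor>x\<rfloor>}"]) auto
  moreover have "(\<lambda>n. n + b) ` Au \<subseteq> NS"
  proof
    fix m assume "m \<in> (\<lambda>n. n + b) ` Au"
    then obtain n where n: "m = n + b" "n \<in> A" "n mod 36 = u" unfolding Au_def by auto
    have "1 \<le> n" "n \<le> nat \<lfloor>x\<rfloor>" using n(2) A by (auto simp: le_nat_floor)
    moreover have "n + b \<in> sumset A" unfolding sumset_def using n b by blast
    ultimately show "m \<in> NS" unfolding NS_def using n sums by (auto simp: mod_add_left_eq)
  qed
  moreover have "inj_on (\<lambda>n. n + b) Au" by (auto simp: inj_on_def)
  ultimately have "card Au \<le> card NS" by (metis card_image card_mono)
  moreover have "(1 - 9 / pi^2 + \<epsilon> / 100) * x / 36 < real (card Au)"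
    using u x unfolding U_set_def res_density_def Au_def by (simp add: field_simps)
  ultimately show ?thesis unfolding NS_def by linarith
qed

lemma U_residue_sums_square_full:
  assumes "\<epsilon> > 0"
  shows "\<forall>\<^sub>F x in at_top. \<forall>A u b. A \<subseteq> {n. 1 \<le> n \<and> real n \<le> x} \<longrightarrow>
           (\<forall>m\<in>sumset A. \<not> squarefree m) \<longrightarrow> u \<in> U_set \<epsilon> A x \<longrightarrow> b \<in> A \<longrightarrow> Q36 (u + b)"
proof -
  obtain N0 where N0: "\<And>N b r. N \<ge> N0 \<Longrightarrow> b \<le> N \<Longrightarrow> r < 36 \<Longrightarrow> \<not> 4 dvd r \<Longrightarrow> \<not> 9 dvd r \<Longrightarrow>
      real (card {n. b < n \<and> n \<le> b + N \<and> n mod 36 = r \<and> \<not> squarefree n})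
        \<le> real N / 36 * (1 - 9 / pi^2) + \<epsilon> / 3600 * real N"
    using nonsquarefree_in_class_density[of "\<epsilon> / 3600"] assms
    unfolding eventually_sequentially by auto
  have "Q36 (u + b)" if x: "x \<ge> max (real N0) 1" and A: "A \<subseteq> {n. 1 \<le> n \<and> real n \<le> x}"
    and sums: "\<forall>m\<in>sumset A. \<not> squarefree m" and u: "u \<in> U_set \<epsilon> A x" and b: "b \<in> A" for x A u b
  proof (rule ccontr)
    assume not_Q: "\<not> Q36 (u + b)"
    define N where "N = nat \<lfloor>x\<rfloor>"
    have "N \<ge> N0" "b \<le> N" "real N \<le> x" using x b A unfolding N_def by (auto simp: le_nat_floor)
    moreover have "\<not> 4 dvd (u + b) mod 36" "\<not> 9 dvd (u + b) mod 36"
      using not_Q Q36_mod[of "u + b"] unfolding Q36_def by auto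
    ultimately have upper: "real (card {n. b < n \<and> n \<le> b + N \<and> n mod 36 = (u + b) mod 36 \<and> \<not> squarefree n})
        \<le> (1 - 9 / pi^2 + \<epsilon> / 100) * real N / 36"
      using N0[of N b "(u + b) mod 36"] by (simp add: field_simps)
    have "(1 - 9 / pi^2 + \<epsilon> / 100) * real N / 36 \<le> (1 - 9 / pi^2 + \<epsilon> / 100) * x / 36"
      using \<open>real N \<le> x\<close> nine_div_pi_sq_less_one assms by (intro divide_right_mono mult_left_mono) auto
    then show False using upper dense_class_translate[OF _ A sums u b] x unfolding N_def by linarith
  qed
  then show ?thesis unfolding eventually_at_top_linorder by blast
qed


subsection \<open>The residue computation modulo 36\<close>

definition parity_pattern :: "nat \<Rightarrow> nat \<Rightarrow> bool" where
  "parity_pattern a v \<longleftrightarrow> even v \<and> (v mod 4 = 2 \<longleftrightarrow> v mod 9 = a) \<and> (v mod 4 = 0 \<longleftrightarrow> v mod 9 = 9 - a)"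

lemma parity_pattern_mod: "parity_pattern a (n mod 36) \<longleftrightarrow> parity_pattern a n"
proof -
  have "n mod 36 mod 4 = n mod 4" "n mod 36 mod 9 = n mod 9" "n mod 36 mod 2 = n mod 2"
    by (simp_all add: mod_mod_cancel)
  then show ?thesis unfolding parity_pattern_def by (simp add: even_iff_mod_2_eq_zero)
qed

definition residue_pair_classified :: "nat \<Rightarrow> nat \<Rightarrow> bool" where
  "residue_pair_classified u1 u2 \<longleftrightarrow>
     (u1 \<noteq> u2 \<longrightarrow> Q36 (u1 + u1) \<longrightarrow> Q36 (u1 + u2) \<longrightarrow> Q36 (u2 + u2) \<longrightarrow>
      (let W = filter (\<lambda>v. Q36 (u1 + v) \<and> Q36 (u2 + v)) [0..<36] in
       list_all (\<lambda>v. 4 dvd v) W \<or> list_all (\<lambda>v. 9 dvd v) W \<or> list_all (\<lambda>v. v mod 4 = 2) W \<or>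
       list_ex (\<lambda>a. list_all (parity_pattern a) W) [1..<9]))"

lemma all_residue_pairs_classified:
  "list_all (\<lambda>u1. list_all (residue_pair_classified u1) [0..<36]) [0..<36]"
  by code_simp

lemma residue_pair_classification:
  assumes "u1 < 36" "u2 < 36" "u1 \<noteq> u2" "Q36 (u1 + u1)" "Q36 (u1 + u2)" "Q36 (u2 + u2)"
  defines "W \<equiv> {v. v < 36 \<and> Q36 (u1 + v) \<and> Q36 (u2 + v)}"
  shows "(\<forall>v\<in>W. 4 dvd v) \<or> (\<forall>v\<in>W. 9 dvd v) \<or> (\<forall>v\<in>W. v mod 4 = 2) \<or>
         (\<exists>a\<in>{1..8}. \<forall>v\<in>W. parity_pattern a v)"
proof -
  let ?L = "filter (\<lambda>v. Q36 (u1 + v) \<and> Q36 (u2 + v)) [0..<36]"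
  have "residue_pair_classified u1 u2"
    using all_residue_pairs_classified assms(1,2) by (simp add: list_all_iff)
  then have "(\<forall>v\<in>set ?L. 4 dvd v) \<or> (\<forall>v\<in>set ?L. 9 dvd v) \<or> (\<forall>v\<in>set ?L. v mod 4 = 2) \<or>
      (\<exists>a\<in>set [1..<9]. \<forall>v\<in>set ?L. parity_pattern a v)"
    using assms(3-6) unfolding residue_pair_classified_def Let_def list_all_iff list_ex_iff by blast
  moreover have "set ?L = W" unfolding W_def by auto
  moreover have "set [1..<9] = {1..8::nat}" by auto
  ultimately show ?thesis by (simp only:)
qed

lemma compatible_set_classification:
  assumes "u1 < 36" "u2 < 36" "u1 \<noteq> u2" "Q36 (u1 + u1)" "Q36 (u1 + u2)" "Q36 (u2 + u2)"
    and compatible: "\<forall>n\<in>A. Q36 (u1 + n) \<and> Q36 (u2 + n)"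
  shows "A \<subseteq> {n. 4 dvd n} \<or> A \<subseteq> {n. 9 dvd n} \<or> A \<subseteq> {n. n mod 4 = 2} \<or>
         (\<exists>a\<in>{1..8}. \<forall>n\<in>A. parity_pattern a n)"
proof -
  define W where "W = {v. v < 36 \<and> Q36 (u1 + v) \<and> Q36 (u2 + v)}"
  have residue: "n mod 36 \<in> W" if "n \<in> A" for n
    using compatible that Q36_add_mod unfolding W_def by auto
  have reduce [simp]: "4 dvd n mod 36 \<longleftrightarrow> 4 dvd n" "9 dvd n mod 36 \<longleftrightarrow> 9 dvd n"
    "n mod 36 mod 4 = n mod 4" for n :: nat
    by (simp_all add: mod_mod_cancel dvd_mod_iff)
  from residue_pair_classification[OF assms(1-6)]
  consider "\<forall>v\<in>W. 4 dvd v" | "\<forall>v\<in>W. 9 dvd v" | "\<forall>v\<in>W. v mod 4 = 2"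
    | a where "a \<in> {1..8}" "\<forall>v\<in>W. parity_pattern a v"
    unfolding W_def by blast
  then show ?thesis
  proof cases
    case 1
    then have "A \<subseteq> {n. 4 dvd n}" using residue by fastforce
    then show ?thesis by blast
  next
    case 2
    then have "A \<subseteq> {n. 9 dvd n}" using residue by fastforce
    then show ?thesis by blast
  next
    case 3
    then have "A \<subseteq> {n. n mod 4 = 2}" using residue by fastforce
    then show ?thesis by blast
  next
    case (4 a)
    then have "\<forall>n\<in>A. parity_pattern a n" using residue parity_pattern_mod by metis
    then show ?thesis using 4(1) by blast
  qed
qed

lemma two_distinct_elements:
  assumes "2 \<le> card S"
  obtains a b where "a \<in> S" "b \<in> S" "a \<noteq> b"
proof -
  have "Suc 1 \<le> card S" using assms by simp
  then obtain a B where "S = insert a B" "a \<notin> B" "1 \<le> card B"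
    unfolding card_le_Suc_iff by blast
  moreover from \<open>1 \<le> card B\<close> obtain b where "b \<in> B" by (metis card.empty ex_in_conv not_one_le_zero)
  ultimately show ?thesis using that by blast
qed


theorem lemma2:
  fixes \<epsilon> :: real
  assumes "\<epsilon> > 0"
  shows "\<exists>X0. \<forall>x::real. x \<ge> X0 \<longrightarrow>
    (\<forall>A :: nat set.
       A \<subseteq> {n. 1 \<le> n \<and> real n \<le> x} \<longrightarrow>
       real (card A) > (delta0 + \<epsilon>) * x \<longrightarrow>
       (\<forall>m \<in> sumset A. \<not> squarefree m) \<longrightarrow>
       \<not> A \<subseteq> {n. 4 dvd n} \<longrightarrow>
       \<not> A \<subseteq> {n. 9 dvd n} \<longrightarrow>
       \<not> A \<subseteq> {n. n mod 4 = 2} \<longrightarrow>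
       card (U_set \<epsilon> A x) \<ge> 2 \<longrightarrow>
       (\<forall>n\<in>A. even n) \<and>
       (\<exists>a\<in>{1..8::nat}. \<forall>n\<in>A.
          (n mod 4 = 2 \<longleftrightarrow> n mod 9 = a) \<and>
          (n mod 4 = 0 \<longleftrightarrow> n mod 9 = 9 - a)))"
proof -
  obtain X0 where X0: "\<forall>x\<ge>X0. \<forall>A u b. A \<subseteq> {n. 1 \<le> n \<and> real n \<le> x} \<longrightarrow>
      (\<forall>m\<in>sumset A. \<not> squarefree m) \<longrightarrow> u \<in> U_set \<epsilon> A x \<longrightarrow> b \<in> A \<longrightarrow> Q36 (u + b)"
    using U_residue_sums_square_full[OF assms] unfolding eventually_at_top_linorder by blast
  show ?thesis
  proof (intro exI[of _ X0] allI impI)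
    fix x A
    assume x: "x \<ge> X0" and A: "A \<subseteq> {n. 1 \<le> n \<and> real n \<le> x}" and sums: "\<forall>m\<in>sumset A. \<not> squarefree m"
      and not4: "\<not> A \<subseteq> {n. 4 dvd n}" and not9: "\<not> A \<subseteq> {n. 9 dvd n}"
      and not2: "\<not> A \<subseteq> {n. n mod 4 = 2}" and U2: "card (U_set \<epsilon> A x) \<ge> 2"
    obtain u1 u2 where u: "u1 \<in> U_set \<epsilon> A x" "u2 \<in> U_set \<epsilon> A x" "u1 \<noteq> u2"
      using two_distinct_elements[OF U2] by blast
    obtain b1 where b1: "b1 \<in> A" "b1 mod 36 = u1" "u1 < 36"
      using U_residue_represented[OF assms u(1)] by blast
    obtain b2 where b2: "b2 \<in> A" "b2 mod 36 = u2" "u2 < 36"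
      using U_residue_represented[OF assms u(2)] by blast
    have square_full: "Q36 (u + n)" if "u \<in> U_set \<epsilon> A x" "n \<in> A" for u n
      using X0 x A sums that by blast
    have square_full_residue: "Q36 (u + v)" if "u \<in> U_set \<epsilon> A x" "n \<in> A" "n mod 36 = v" for u n v
      using square_full[OF that(1,2)] Q36_add_mod[of u n] that(3) by simp
    have "\<forall>n\<in>A. Q36 (u1 + n) \<and> Q36 (u2 + n)" using square_full u by blast
    from compatible_set_classification[OF b1(3) b2(3) u(3) square_full_residue[OF u(1) b1(1,2)]
        square_full_residue[OF u(1) b2(1,2)] square_full_residue[OF u(2) b2(1,2)] this]
    obtain a where "a \<in> {1..8}" "\<forall>n\<in>A. parity_pattern a n" using not4 not9 not2 by blast
    then show "(\<forall>n\<in>A. even n) \<and> (\<exists>a\<in>{1..8::nat}. \<forall>n\<in>A.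
        (n mod 4 = 2 \<longleftrightarrow> n mod 9 = a) \<and> (n mod 4 = 0 \<longleftrightarrow> n mod 9 = 9 - a))"
      unfolding parity_pattern_def by (intro conjI bexI[of _ a]) auto
  qed
qed

end
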